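(* In the setting of the context, write $\det(zI_q-\hat{E}(\kappa))=\sum_{\ell=-\bar r}^{\bar p}d_\ell(z)\kappa^\ell$ with $d_{-\bar r}\not\equiv 0$ and $d_{\bar p}\not\equiv 0$. Then $$\bar r\leq\sum_{i:\,c_i>0}c_i\qquad\text{and}\qquad \bar p\leq-\sum_{i:\,c_i<0}c_i.$$
   Context: Fix an integer $q\geq 2$, integer velocities $c_1,\dots,c_q\in\mathbb{Z}$, an invertible matrix $M\in\mathbb{R}^{q\times q}$, relaxation parameters $s_1\in\mathbb{R}$, $s_2,\dots,s_q\in(0,2]$, and $\epsilon\in\mathbb{R}^q$ with $\epsilon_1=1$. Set $K:=I_q+\mathrm{diag}(s_1,\dots,s_q)(\epsilon e_1^{\mathsf T}-I_q)$ and, for $\kappa\in\mathbb{C}\setminus\{0\}$, $\hat{E}(\kappa):=M\,\mathrm{diag}(\kappa^{-c_1},\dots,\kappa^{-c_q})M^{-1}K$. The coefficients $d_\ell(z)$ are polynomials in $z$; $\det(zI_q-\hat{E}(\kappa))$ is a Laurent polynomial in $\kappa$. *)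

theory Defs
  imports "HOL-Analysis.Analysis" "HOL-Computational_Algebra.Polynomial"
begin

text \<open>Index set {1..q} is modelled by a finite type 'n with CARD('n) = q;
  the distinguished index 1 is a fixed element i1 :: 'n.\<close>

definition cmat :: "real^'n^'m \<Rightarrow> complex^'n^'m" where
  "cmat A = (\<chi> i j. complex_of_real (A $ i $ j))"

definition Kmat :: "('n::finite) \<Rightarrow> ('n \<Rightarrow> real) \<Rightarrow> ('n \<Rightarrow> real) \<Rightarrow> real^'n^'n" where
  "Kmat i1 s \<epsilon> = mat 1 + (\<chi> i j. if i = j then s i else 0) **
      ((\<chi> i j. \<epsilon> i * (if j = i1 then 1 else 0)) - mat 1)"

definition Ehat :: "real^'n^'n \<Rightarrow> ('n::finite \<Rightarrow> int) \<Rightarrow> 'n \<Rightarrow> ('n \<Rightarrow> real) \<Rightarrow> ('n \<Rightarrow> real)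
    \<Rightarrow> complex \<Rightarrow> complex^'n^'n" where
  "Ehat M c i1 s \<epsilon> \<kappa> = cmat M ** (\<chi> i j. if i = j then \<kappa> powi (- c i) else 0)
      ** cmat (matrix_inv M) ** cmat (Kmat i1 s \<epsilon>)"

end

theory Submission
  imports Defs
begin

text \<open>Conjugating by M shows that det(zI - E(\<kappa>)) = det(zI - D(\<kappa>) A) with
  D(\<kappa>) = diag(\<kappa>^(-c_i)) and A independent of \<kappa>. Row i of zI - D(\<kappa>) A only
  involves the exponents 0 and -c_i, so by the Leibniz formula every monomial of the
  determinant has exponent between -\<Sum>_{c_i>0} c_i and -\<Sum>_{c_i<0} c_i. Since the
  Laurent coefficients of a function on \<complex> - {0} are unique, every nonzero d_l
  has l in that range. Nothing about K is used.\<close>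

definition laurent_in :: "int \<Rightarrow> int \<Rightarrow> ('a::field \<Rightarrow> 'a) \<Rightarrow> bool" where
  "laurent_in a b f \<longleftrightarrow> (\<exists>g. \<forall>x. x \<noteq> 0 \<longrightarrow> f x = (\<Sum>l=a..b. g l * x powi l))"

lemma laurent_inI:
  assumes "\<And>x. x \<noteq> 0 \<Longrightarrow> f x = (\<Sum>l=a..b. g l * x powi l)"
  shows "laurent_in a b f"
  unfolding laurent_in_def using assms by blast

lemma laurent_in_cong:
  assumes "laurent_in a b f" and "\<And>x. x \<noteq> 0 \<Longrightarrow> f x = h x"
  shows "laurent_in a b h"
  using assms unfolding laurent_in_def by metis

lemma sum_powi_extend:
  fixes g :: "int \<Rightarrow> 'a::field"
  assumes "{a..b} \<subseteq> {a'..b'}"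
  shows "(\<Sum>l=a..b. g l * x powi l) = (\<Sum>l=a'..b'. (if l \<in> {a..b} then g l else 0) * x powi l)"
  by (rule sum.mono_neutral_cong_left) (use assms in auto)

lemma laurent_in_mono:
  assumes "laurent_in a b f" and "a' \<le> a" and "b \<le> b'"
  shows "laurent_in a' b' f"
proof -
  obtain g where "\<And>x. x \<noteq> 0 \<Longrightarrow> f x = (\<Sum>l=a..b. g l * x powi l)"
    using assms(1) unfolding laurent_in_def by blast
  with assms(2,3) show ?thesis
    by (intro laurent_inI[where g = "\<lambda>l. if l \<in> {a..b} then g l else 0"])
      (simp add: sum_powi_extend[of a b a' b'])
qed

lemma laurent_in_monom: "laurent_in m m (\<lambda>x. u * x powi m)"
  by (rule laurent_inI[where g = "\<lambda>_. u"]) simp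

lemma laurent_in_zero: "laurent_in a b (\<lambda>_. 0)"
  by (rule laurent_inI[where g = "\<lambda>_. 0"]) simp

lemma laurent_in_add:
  assumes "laurent_in a b f" and "laurent_in a b h"
  shows "laurent_in a b (\<lambda>x. f x + h x)"
proof -
  obtain g where g: "\<And>x. x \<noteq> 0 \<Longrightarrow> f x = (\<Sum>l=a..b. g l * x powi l)"
    using assms(1) unfolding laurent_in_def by blast
  obtain g' where g': "\<And>x. x \<noteq> 0 \<Longrightarrow> h x = (\<Sum>l=a..b. g' l * x powi l)"
    using assms(2) unfolding laurent_in_def by blast
  show ?thesis
    by (rule laurent_inI[where g = "\<lambda>l. g l + g' l"])
      (simp add: g g' sum.distrib distrib_right)
qed

lemma laurent_in_scale:
  assumes "laurent_in a b f"
  shows "laurent_in a b (\<lambda>x. u * f x)"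
proof -
  obtain g where g: "\<And>x. x \<noteq> 0 \<Longrightarrow> f x = (\<Sum>l=a..b. g l * x powi l)"
    using assms unfolding laurent_in_def by blast
  show ?thesis
    by (rule laurent_inI[where g = "\<lambda>l. u * g l"]) (simp add: g sum_distrib_left mult.assoc)
qed

lemma laurent_in_sum:
  assumes "finite S" and "\<And>i. i \<in> S \<Longrightarrow> laurent_in a b (f i)"
  shows "laurent_in a b (\<lambda>x. \<Sum>i\<in>S. f i x)"
  using assms by (induction S rule: finite_induct) (simp_all add: laurent_in_zero laurent_in_add)

lemma laurent_in_mult:
  assumes "laurent_in a b f" and "laurent_in a' b' h"
  shows "laurent_in (a + a') (b + b') (\<lambda>x. f x * h x)"
proof -
  obtain g where g: "\<And>x. x \<noteq> 0 \<Longrightarrow> f x = (\<Sum>l=a..b. g l * x powi l)"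
    using assms(1) unfolding laurent_in_def by blast
  obtain g' where g': "\<And>x. x \<noteq> 0 \<Longrightarrow> h x = (\<Sum>m=a'..b'. g' m * x powi m)"
    using assms(2) unfolding laurent_in_def by blast
  have "laurent_in (a + a') (b + b') (\<lambda>x. \<Sum>l=a..b. \<Sum>m=a'..b'. (g l * g' m) * x powi (l + m))"
    by (intro laurent_in_sum laurent_in_mono[OF laurent_in_monom]) auto
  moreover have "(\<Sum>l=a..b. \<Sum>m=a'..b'. (g l * g' m) * x powi (l + m)) = f x * h x"
    if "x \<noteq> 0" for x
    unfolding g[OF that] g'[OF that] sum_product using that by (simp add: power_int_add mult_ac)
  ultimately show ?thesis
    by (rule laurent_in_cong)
qed

lemma laurent_in_prod:
  assumes "finite S" and "\<And>i. i \<in> S \<Longrightarrow> laurent_in (a i) (b i) (f i)"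
  shows "laurent_in (\<Sum>i\<in>S. a i) (\<Sum>i\<in>S. b i) (\<lambda>x. \<Prod>i\<in>S. f i x)"
  using assms
proof (induction S rule: finite_induct)
  case empty
  show ?case using laurent_in_monom[of 0 1] by simp
next
  case (insert i S)
  then show ?case using laurent_in_mult[of "a i" "b i" "f i"] by simp
qed

lemma laurent_in_det:
  fixes F :: "'a::field \<Rightarrow> 'a^'n^'n"
  assumes "\<And>i j. laurent_in (a i) (b i) (\<lambda>x. F x $ i $ j)"
  shows "laurent_in (\<Sum>i\<in>UNIV. a i) (\<Sum>i\<in>UNIV. b i) (\<lambda>x. det (F x))"
  unfolding det_def by (intro laurent_in_sum laurent_in_scale laurent_in_prod assms) simp_all

text \<open>Dividing by x^L turns the Laurent polynomial into an ordinary polynomial with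
  infinitely many roots.\<close>

lemma sum_powi_eq_0_imp_coeff_eq_0:
  fixes h :: "int \<Rightarrow> 'a::field_char_0"
  assumes zero: "\<And>x. x \<noteq> 0 \<Longrightarrow> (\<Sum>l=L..U. h l * x powi l) = 0" and l: "l \<in> {L..U}"
  shows "h l = 0"
proof -
  define p where "p = (\<Sum>k\<in>{L..U}. monom (h k) (nat (k - L)))"
  have "poly p x = 0" if x: "x \<noteq> 0" for x
  proof -
    have "x ^ nat (k - L) = x powi k * x powi (- L)" if "k \<in> {L..U}" for k
      using that x by (simp flip: power_int_add power_int_of_nat)
    then have "poly p x = (\<Sum>k=L..U. h k * x powi k) * x powi (- L)"
      by (simp add: p_def poly_sum poly_monom sum_distrib_right mult.assoc)
    with zero[OF x] show ?thesis by simp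
  qed
  then have "- {0} \<subseteq> {x. poly p x = 0}"
    by auto
  moreover have "infinite (- {0 :: 'a})"
    using infinite_UNIV_char_0 by (simp add: Compl_eq_Diff_UNIV)
  ultimately have "p = 0"
    using poly_roots_finite finite_subset by blast
  moreover have "coeff p (nat (l - L)) = h l"
  proof -
    have "coeff (monom (h k) (nat (k - L))) (nat (l - L)) = (if k = l then h k else 0)"
      if "k \<in> {L..U}" for k
      using that l by (auto simp: coeff_monom)
    then show ?thesis
      using l by (simp add: p_def coeff_sum)
  qed
  ultimately show ?thesis by simp
qed

lemma laurent_in_coeff_eq_0:
  fixes g :: "int \<Rightarrow> 'a::field_char_0"
  assumes "laurent_in L U f"
    and f: "\<And>x. x \<noteq> 0 \<Longrightarrow> f x = (\<Sum>l=a..b. g l * x powi l)"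
    and "l \<in> {a..b}" and "l \<notin> {L..U}"
  shows "g l = 0"
proof -
  obtain g' where g': "\<And>x. x \<noteq> 0 \<Longrightarrow> f x = (\<Sum>l=L..U. g' l * x powi l)"
    using assms(1) unfolding laurent_in_def by blast
  define lo where "lo = min a L"
  define hi where "hi = max b U"
  define h where "h l = (if l \<in> {a..b} then g l else 0) - (if l \<in> {L..U} then g' l else 0)"
    for l
  have "(\<Sum>l=lo..hi. h l * x powi l) = 0" if "x \<noteq> 0" for x
  proof -
    have "(\<Sum>l=lo..hi. h l * x powi l) = (\<Sum>l=a..b. g l * x powi l) - (\<Sum>l=L..U. g' l * x powi l)"
      using sum_powi_extend[of a b lo hi g] sum_powi_extend[of L U lo hi g']
      by (simp add: h_def lo_def hi_def left_diff_distrib sum_subtractf)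
    with f[OF that] g'[OF that] show ?thesis by simp
  qed
  moreover have "l \<in> {lo..hi}"
    using assms(3) by (auto simp: lo_def hi_def)
  ultimately have "h l = 0"
    by (rule sum_powi_eq_0_imp_coeff_eq_0)
  with assms(3,4) show ?thesis
    by (auto simp: h_def)
qed

lemma sum_max_0:
  fixes f :: "'b \<Rightarrow> 'a::linordered_ab_group_add"
  shows "finite A \<Longrightarrow> (\<Sum>k\<in>A. max 0 (f k)) = (\<Sum>k\<in>{k\<in>A. 0 < f k}. f k)"
  by (simp add: sum.inter_filter max_def) (rule sum.cong; auto)

lemma sum_min_0:
  fixes f :: "'b \<Rightarrow> 'a::linordered_ab_group_add"
  shows "finite A \<Longrightarrow> (\<Sum>k\<in>A. min 0 (f k)) = (\<Sum>k\<in>{k\<in>A. f k < 0}. f k)"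
  by (simp add: sum.inter_filter min_def) (rule sum.cong; auto)

lemma diag_matrix_mult_nth:
  "((\<chi> i j. if i = j then u i else 0) ** (A::'a::semiring_1^'n^'m)) $ k $ j = u k * A $ k $ j"
  by (simp add: matrix_matrix_mult_def if_distrib if_distribR sum.delta cong: if_cong)

lemma laurent_in_det_mat_minus_diag_mult:
  fixes A :: "'a::field^'n^'n" and c :: "'n \<Rightarrow> int"
  shows "laurent_in (- (\<Sum>i\<in>{i. c i > 0}. c i)) (- (\<Sum>i\<in>{i. c i < 0}. c i))
    (\<lambda>x. det (mat z - (\<chi> i j. if i = j then x powi (- c i) else 0) ** A))"
proof -
  have "laurent_in (- max 0 (c i)) (- min 0 (c i))
      (\<lambda>x. (mat z - (\<chi> i j. if i = j then x powi (- c i) else 0) ** A) $ i $ j)" for i j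
  proof -
    have "laurent_in (- max 0 (c i)) (- min 0 (c i))
        (\<lambda>x. (if i = j then z else 0) * x powi 0 + (- A $ i $ j) * x powi (- c i))"
      by (intro laurent_in_add laurent_in_mono[OF laurent_in_monom]) auto
    then show ?thesis
      by (rule laurent_in_cong) (simp add: diag_matrix_mult_nth mat_def mult.commute)
  qed
  then have "laurent_in (\<Sum>i\<in>UNIV. - max 0 (c i)) (\<Sum>i\<in>UNIV. - min 0 (c i))
      (\<lambda>x. det (mat z - (\<chi> i j. if i = j then x powi (- c i) else 0) ** A))"
    by (rule laurent_in_det)
  moreover have "(\<Sum>i\<in>UNIV. - max 0 (c i)) = - (\<Sum>i\<in>{i. c i > 0}. c i)"
    by (simp add: sum_negf sum_max_0)
  moreover have "(\<Sum>i\<in>UNIV. - min 0 (c i)) = - (\<Sum>i\<in>{i. c i < 0}. c i)"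
    by (simp add: sum_negf sum_min_0)
  ultimately show ?thesis
    by (simp only:)
qed

lemma mat_mult_commute: "mat z ** (A::'a::comm_semiring_1^'n^'n) = A ** mat z"
  by (simp add: matrix_matrix_mult_def mat_def vec_eq_iff if_distrib if_distribR sum.delta
      mult.commute cong: if_cong)

lemma matrix_diff_ldistrib: "(A::'a::ring_1^'n^'m) ** (B - C) = A ** B - A ** C"
  by (simp add: matrix_matrix_mult_def vec_eq_iff algebra_simps sum_subtractf)

lemma matrix_diff_rdistrib: "((B::'a::ring_1^'n^'m) - C) ** A = B ** A - C ** A"
  by (simp add: matrix_matrix_mult_def vec_eq_iff algebra_simps sum_subtractf)

lemma det_mat_minus_mult_commute:
  fixes P Y :: "'a::comm_ring_1^'n^'n"
  assumes "invertible P"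
  shows "det (mat z - P ** Y) = det (mat z - Y ** P)"
proof -
  obtain Q where PQ: "P ** Q = mat 1" and QP: "Q ** P = mat 1"
    using assms unfolding invertible_def by blast
  have "P ** (mat z - Y ** P) ** Q = mat z ** (P ** Q) - P ** Y ** (P ** Q)"
    by (simp add: matrix_diff_ldistrib matrix_diff_rdistrib mat_mult_commute matrix_mul_assoc)
  then have "mat z - P ** Y = P ** (mat z - Y ** P) ** Q"
    by (simp add: PQ)
  then have "det (mat z - P ** Y) = det (mat z - Y ** P) * det (Q ** P)"
    by (simp add: det_mul)
  with QP show ?thesis by simp
qed

lemma cmat_mult: "cmat (A ** B) = cmat A ** cmat B"
  by (simp add: cmat_def matrix_matrix_mult_def vec_eq_iff)

lemma cmat_one: "cmat (mat 1) = mat 1"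
  by (simp add: cmat_def mat_def vec_eq_iff)

lemma invertible_cmat:
  assumes "invertible M"
  shows "invertible (cmat M)"
proof -
  obtain M' where "M ** M' = mat 1" and "M' ** M = mat 1"
    using assms unfolding invertible_def by blast
  then have "cmat M ** cmat M' = mat 1" and "cmat M' ** cmat M = mat 1"
    by (metis cmat_mult cmat_one)+
  then show ?thesis
    unfolding invertible_def by blast
qed

lemma laurent_in_det_mat_minus_Ehat:
  assumes "invertible M"
  shows "laurent_in (- (\<Sum>i\<in>{i. c i > 0}. c i)) (- (\<Sum>i\<in>{i. c i < 0}. c i))
    (\<lambda>\<kappa>. det (mat z - Ehat M c i1 s \<epsilon> \<kappa>))"
proof -
  define D where "D \<kappa> = (\<chi> i j. if i = j then \<kappa> powi (- c i) else 0)" for \<kappa> :: complex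
  define A where "A = cmat (matrix_inv M) ** cmat (Kmat i1 s \<epsilon>) ** cmat M"
  have "det (mat z - Ehat M c i1 s \<epsilon> \<kappa>) = det (mat z - D \<kappa> ** A)" for \<kappa>
  proof -
    have "Ehat M c i1 s \<epsilon> \<kappa> = cmat M ** (D \<kappa> ** cmat (matrix_inv M) ** cmat (Kmat i1 s \<epsilon>))"
      by (simp add: Ehat_def D_def matrix_mul_assoc)
    then have "det (mat z - Ehat M c i1 s \<epsilon> \<kappa>)
        = det (mat z - D \<kappa> ** cmat (matrix_inv M) ** cmat (Kmat i1 s \<epsilon>) ** cmat M)"
      by (simp only: det_mat_minus_mult_commute[OF invertible_cmat[OF assms]])
    then show ?thesis
      by (simp add: A_def matrix_mul_assoc)
  qed
  then show ?thesis
    using laurent_in_det_mat_minus_diag_mult[of c z A] by (simp add: D_def)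
qed

theorem mainTheorem3:
  fixes M :: "real^'n^'n" and c :: "'n \<Rightarrow> int" and i1 :: 'n
    and s \<epsilon> :: "'n \<Rightarrow> real"
    and d :: "int \<Rightarrow> complex poly" and rb pb :: int
  assumes "CARD('n) \<ge> 2"
    and "invertible M"
    and "\<And>i. i \<noteq> i1 \<Longrightarrow> 0 < s i \<and> s i \<le> 2"
    and "\<epsilon> i1 = 1"
    and "- rb \<le> pb"
    and expand: "\<And>z \<kappa>. \<kappa> \<noteq> 0 \<Longrightarrow>
           det ((mat z) - Ehat M c i1 s \<epsilon> \<kappa>)
             = (\<Sum>l = - rb..pb. poly (d l) z * \<kappa> powi l)"
    and "d (- rb) \<noteq> 0" and "d pb \<noteq> 0"
  shows "rb \<le> (\<Sum>i \<in> {i. c i > 0}. c i) \<and> pb \<le> - (\<Sum>i \<in> {i. c i < 0}. c i)"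
proof -
  define P where "P = (\<Sum>i \<in> {i. c i > 0}. c i)"
  define N where "N = - (\<Sum>i \<in> {i. c i < 0}. c i)"
  have "l \<in> {- P..N}" if "l \<in> {- rb..pb}" and "d l \<noteq> 0" for l
  proof (rule ccontr)
    assume "l \<notin> {- P..N}"
    have "poly (d l) z = 0" for z
      using laurent_in_det_mat_minus_Ehat[OF assms(2), of c z i1 s \<epsilon>, folded P_def N_def]
        expand \<open>l \<in> {- rb..pb}\<close> \<open>l \<notin> {- P..N}\<close>
      by (rule laurent_in_coeff_eq_0[where g = "\<lambda>l. poly (d l) z"])
    with \<open>d l \<noteq> 0\<close> show False
      using poly_all_0_iff_0 by blast
  qed
  with assms(5,7,8) show ?thesis
    unfolding P_def N_def by fastforce
qed

end
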